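(* Fix $a\in[0,\infty)$. For a function $G:[0,1]^2\to[0,1]$ the following are equivalent: (1) There exist a continuous and strictly increasing function $t:[0,1]\to[0,\infty]$ and a continuous and increasing function $s:[0,\infty]\to[0,1]$ such that $G(x,y)=s(t(x)+t(y))$ for all $x,y$, $G$ is a grouping function, and at least one of the following holds: (a) $t(x)=\frac{a}{2}$ if and only if $x=0$; (b) $s(x)=0$ if and only if $x\in[0,a]$. (2) $G$ is a grouping function and there exist a pseudo automorphism $\mathcal{F}$ and a strict t-conorm $S$ with $G(x,y)=\mathcal{F}(S(x,y))$ for all $(x,y)\in[0,1]^2$. (3) There exist a strictly increasing bijection $\varphi:[0,1]\to[0,1]$ and a pseudo automorphism $\mathcal{H}$ such that $G(x,y)=\mathcal{H}(\varphi(x)+\varphi(y)-\varphi(x)\varphi(y))$ for all $(x,y)\in[0,1]^2$.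
   Context: "Increasing" means non-decreasing. Arithmetic in $[0,\infty]$ uses $c+\infty=\infty$; continuity on $[0,\infty]$ refers to the usual topology of the extended half-line. A grouping function is a map $G:[0,1]^2\to[0,1]$ that is (G1) commutative, (G2) $G(x,y)=0$ iff $x=y=0$, (G3) $G(x,y)=1$ iff $x=1$ or $y=1$, (G4) increasing in each variable, (G5) continuous. A pseudo automorphism is a continuous increasing map $\mathcal{F}:[0,1]\to[0,1]$ with $\mathcal{F}(x)=1$ iff $x=1$ and $\mathcal{F}(x)=0$ iff $x=0$. A t-conorm is a commutative, associative map $S:[0,1]^2\to[0,1]$, increasing in each variable, with $S(x,0)=x$; it is strict if it is continuous and strictly increasing on $[0,1)^2$ (i.e. $S(x,y)<S(x',y)$ whenever $y<1$ and $x<x'$). *)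

theory Defs
  imports "HOL-Analysis.Analysis" "HOL-Library.Extended_Nonnegative_Real"
begin

definition grouping_function :: "(real \<Rightarrow> real \<Rightarrow> real) \<Rightarrow> bool" where
  "grouping_function G \<longleftrightarrow>
     (\<forall>x\<in>{0..1}. \<forall>y\<in>{0..1}. G x y \<in> {0..1}) \<and>
     (\<forall>x\<in>{0..1}. \<forall>y\<in>{0..1}. G x y = G y x) \<and>
     (\<forall>x\<in>{0..1}. \<forall>y\<in>{0..1}. G x y = 0 \<longleftrightarrow> x = 0 \<and> y = 0) \<and>
     (\<forall>x\<in>{0..1}. \<forall>y\<in>{0..1}. G x y = 1 \<longleftrightarrow> x = 1 \<or> y = 1) \<and>
     (\<forall>x\<in>{0..1}. \<forall>x'\<in>{0..1}. \<forall>y\<in>{0..1}. x \<le> x' \<longrightarrow> G x y \<le> G x' y) \<and>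
     (\<forall>x\<in>{0..1}. \<forall>y\<in>{0..1}. \<forall>y'\<in>{0..1}. y \<le> y' \<longrightarrow> G x y \<le> G x y') \<and>
     continuous_on ({0..1} \<times> {0..1}) (\<lambda>(x, y). G x y)"

definition pseudo_automorphism :: "(real \<Rightarrow> real) \<Rightarrow> bool" where
  "pseudo_automorphism F \<longleftrightarrow>
     (\<forall>x\<in>{0..1}. F x \<in> {0..1}) \<and>
     continuous_on {0..1} F \<and> mono_on {0..1} F \<and>
     (\<forall>x\<in>{0..1}. F x = 1 \<longleftrightarrow> x = 1) \<and>
     (\<forall>x\<in>{0..1}. F x = 0 \<longleftrightarrow> x = 0)"

definition t_conorm :: "(real \<Rightarrow> real \<Rightarrow> real) \<Rightarrow> bool" where
  "t_conorm S \<longleftrightarrow>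
     (\<forall>x\<in>{0..1}. \<forall>y\<in>{0..1}. S x y \<in> {0..1}) \<and>
     (\<forall>x\<in>{0..1}. \<forall>y\<in>{0..1}. S x y = S y x) \<and>
     (\<forall>x\<in>{0..1}. \<forall>y\<in>{0..1}. \<forall>z\<in>{0..1}. S (S x y) z = S x (S y z)) \<and>
     (\<forall>x\<in>{0..1}. \<forall>x'\<in>{0..1}. \<forall>y\<in>{0..1}. x \<le> x' \<longrightarrow> S x y \<le> S x' y) \<and>
     (\<forall>x\<in>{0..1}. \<forall>y\<in>{0..1}. \<forall>y'\<in>{0..1}. y \<le> y' \<longrightarrow> S x y \<le> S x y') \<and>
     (\<forall>x\<in>{0..1}. S x 0 = x)"

definition strict_t_conorm :: "(real \<Rightarrow> real \<Rightarrow> real) \<Rightarrow> bool" where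
  "strict_t_conorm S \<longleftrightarrow> t_conorm S \<and>
     continuous_on ({0..1} \<times> {0..1}) (\<lambda>(x, y). S x y) \<and>
     (\<forall>x\<in>{0..1}. \<forall>x'\<in>{0..1}. \<forall>y\<in>{0..1}. y < 1 \<and> x < x' \<longrightarrow> S x y < S x' y)"

end

theory Submission
  imports Defs
begin

(* Every strict t-conorm S is isomorphic to the probabilistic sum v + w - v w.  The isomorphism
   sends an exponent r >= 0 to the S-power of 1/2 with exponent r: at dyadic r it is built from
   iterated S-square roots of 1/2, and it is extended to all r by monotonicity; continuity and
   strict monotonicity of S make the extension continuous, additive and onto [0,1).  This gives
   (2) <-> (3).  Since -ln (1 - v) is an additive generator of the probabilistic sum with values
   in [0,oo], a representation (3) turns into one of type (1) with t = a/2 + gen o phi, which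
   satisfies (a).  Conversely, in (1) the boundary conditions G 0 1 = 1 > G x x for x < 1 force
   t 1 = oo, and 1 - exp (- t), rescaled affinely onto [0,1], is the automorphism phi of (3). *)

section \<open>The probabilistic sum and its additive generator\<close>

definition prob_sum :: "real \<Rightarrow> real \<Rightarrow> real" where
  "prob_sum v w = v + w - v * w"

lemma one_minus_prob_sum: "1 - prob_sum v w = (1 - v) * (1 - w)"
  by (simp add: prob_sum_def algebra_simps)

lemma prob_sum_commute: "prob_sum v w = prob_sum w v"
  by (simp add: prob_sum_def algebra_simps)

lemma prob_sum_assoc: "prob_sum (prob_sum u v) w = prob_sum u (prob_sum v w)"
  by (simp add: prob_sum_def algebra_simps)

lemma prob_sum_0_right [simp]: "prob_sum v 0 = v"
  by (simp add: prob_sum_def)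

lemma prob_sum_in_unit:
  assumes "v \<in> {0..1}" "w \<in> {0..1}"
  shows "prob_sum v w \<in> {0..1}"
proof -
  have "(1 - v) * (1 - w) \<in> {0..1}" using assms by (auto intro: mult_le_one)
  then show ?thesis using one_minus_prob_sum[of v w] by auto
qed

lemma prob_sum_eq_1_iff: "prob_sum v w = 1 \<longleftrightarrow> v = 1 \<or> w = 1"
  using one_minus_prob_sum[of v w] by auto

lemma prob_sum_less_1:
  assumes "v < 1" "w < 1"
  shows "prob_sum v w < 1"
proof -
  have "0 < (1 - v) * (1 - w)" using assms by simp
  then show ?thesis using one_minus_prob_sum[of v w] by linarith
qed

lemma prob_sum_eq_0_iff:
  assumes "v \<in> {0..1}" "w \<in> {0..1}"
  shows "prob_sum v w = 0 \<longleftrightarrow> v = 0 \<and> w = 0"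
proof -
  have "prob_sum v w = v * (1 - w) + w" by (simp add: prob_sum_def algebra_simps)
  moreover have "0 \<le> v * (1 - w)" "0 \<le> w" using assms by auto
  ultimately show ?thesis by (metis add_nonneg_eq_0_iff diff_zero mult_cancel_left1)
qed

lemma prob_sum_mono_left: "w \<le> 1 \<Longrightarrow> v \<le> v' \<Longrightarrow> prob_sum v w \<le> prob_sum v' w"
  using one_minus_prob_sum[of v w] one_minus_prob_sum[of v' w]
  by (smt (verit) mult_right_mono)

lemma prob_sum_strict_mono_left: "w < 1 \<Longrightarrow> v < v' \<Longrightarrow> prob_sum v w < prob_sum v' w"
  using one_minus_prob_sum[of v w] one_minus_prob_sum[of v' w]
  by (smt (verit) mult_strict_right_mono)

lemma continuous_on_prob_sum [continuous_intros]:
  "continuous_on A f \<Longrightarrow> continuous_on A g \<Longrightarrow> continuous_on A (\<lambda>x. prob_sum (f x) (g x))"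
  unfolding prob_sum_def by (intro continuous_intros)

definition prob_sum_gen :: "real \<Rightarrow> ennreal" where
  "prob_sum_gen v = (if v < 1 then ennreal (- ln (1 - v)) else \<infinity>)"

definition prob_sum_gen_inv :: "ennreal \<Rightarrow> real" where
  "prob_sum_gen_inv u = (if u = \<infinity> then 1 else 1 - exp (- enn2real u))"

lemma prob_sum_gen_0 [simp]: "prob_sum_gen 0 = 0"
  by (simp add: prob_sum_gen_def)

lemma prob_sum_gen_inv_in_unit: "prob_sum_gen_inv u \<in> {0..1}"
  by (simp add: prob_sum_gen_inv_def)

lemma prob_sum_gen_inv_ennreal: "0 \<le> r \<Longrightarrow> prob_sum_gen_inv (ennreal r) = 1 - exp (- r)"
  by (simp add: prob_sum_gen_inv_def)

lemma prob_sum_gen_inverse: "v \<in> {0..1} \<Longrightarrow> prob_sum_gen_inv (prob_sum_gen v) = v"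
  by (auto simp: prob_sum_gen_inv_def prob_sum_gen_def)

lemma prob_sum_gen_inv_inverse: "prob_sum_gen (prob_sum_gen_inv u) = u"
  by (cases u) (auto simp: prob_sum_gen_inv_def prob_sum_gen_def)

lemma prob_sum_gen_mono: "mono prob_sum_gen"
  by (auto simp: mono_def prob_sum_gen_def intro!: ennreal_leI)

lemma prob_sum_gen_inv_strict_mono: "strict_mono prob_sum_gen_inv"
  by (rule strict_monoI) (metis prob_sum_gen_inv_inverse prob_sum_gen_mono monoD not_le)

lemma prob_sum_gen_strict_mono: "strict_mono_on {0..1} prob_sum_gen"
  by (rule strict_mono_onI)
    (metis prob_sum_gen_inverse prob_sum_gen_inv_strict_mono strict_mono_less)

lemma prob_sum_gen_surj: "surj prob_sum_gen"
  by (metis prob_sum_gen_inv_inverse surjI)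

lemma continuous_on_prob_sum_gen: "continuous_on UNIV prob_sum_gen"
  by (rule continuous_onI_mono) (simp_all add: prob_sum_gen_surj monoD[OF prob_sum_gen_mono])

lemma continuous_on_prob_sum_gen_inv: "continuous_on UNIV prob_sum_gen_inv"
proof -
  have "continuous_on (prob_sum_gen ` {0..1}) prob_sum_gen_inv"
    by (rule continuous_on_inv)
      (auto intro: continuous_on_subset[OF continuous_on_prob_sum_gen] simp: prob_sum_gen_inverse)
  moreover have "prob_sum_gen ` {0..1} = UNIV"
    by (metis UNIV_eq_I image_eqI prob_sum_gen_inv_in_unit prob_sum_gen_inv_inverse)
  ultimately show ?thesis by simp
qed

lemma ln_one_minus_prob_sum:
  assumes "v < 1" "w < 1"
  shows "ln (1 - prob_sum v w) = ln (1 - v) + ln (1 - w)"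
  using assms by (simp add: one_minus_prob_sum ln_mult)

lemma prob_sum_gen_prob_sum:
  assumes "v \<in> {0..1}" "w \<in> {0..1}"
  shows "prob_sum_gen (prob_sum v w) = prob_sum_gen v + prob_sum_gen w"
proof (cases "v = 1 \<or> w = 1")
  case True
  then show ?thesis by (auto simp: prob_sum_gen_def prob_sum_def)
next
  case False
  then have "v < 1" "w < 1" using assms by auto
  moreover from this have "prob_sum v w < 1" by (rule prob_sum_less_1)
  moreover have "0 \<le> - ln (1 - v)" "0 \<le> - ln (1 - w)" using assms \<open>v < 1\<close> \<open>w < 1\<close> by auto
  ultimately show ?thesis
    by (simp add: prob_sum_gen_def ln_one_minus_prob_sum ennreal_plus[symmetric] del: ennreal_plus)
qed

lemma prob_sum_gen_inv_add: "prob_sum_gen_inv (u + w) = prob_sum (prob_sum_gen_inv u) (prob_sum_gen_inv w)"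
  by (metis prob_sum_gen_prob_sum prob_sum_gen_inv_in_unit prob_sum_gen_inv_inverse
      prob_sum_gen_inverse prob_sum_in_unit)

lemma prob_sum_gen_inv_shift:
  assumes "0 \<le> a" "v \<in> {0..1}"
  shows "1 - exp a * (1 - prob_sum_gen_inv (ennreal a + prob_sum_gen v)) = v"
proof -
  have "1 - prob_sum_gen_inv (ennreal a + prob_sum_gen v) = exp (- a) * (1 - v)"
    using assms by (simp add: prob_sum_gen_inv_add prob_sum_gen_inv_ennreal prob_sum_gen_inverse one_minus_prob_sum)
  then show ?thesis by (simp add: exp_minus field_simps)
qed

section \<open>Automorphisms of the unit interval\<close>

lemma mono_on_onto_imp_continuous_on:
  fixes g :: "real \<Rightarrow> real"
  assumes mono: "mono_on {a..b} g" and onto: "g ` {a..b} = {a..b}"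
  shows "continuous_on {a..b} g"
proof -
  (* extended by the identity, g becomes a monotone surjection of the real line *)
  define g' where "g' x = (if x \<in> {a..b} then g x else x)" for x
  have "g' ` UNIV = UNIV"
  proof -
    have "{a..b} \<subseteq> g' ` {a..b}" using onto by (simp add: g'_def)
    moreover have "- {a..b} \<subseteq> g' ` (- {a..b})" by (auto simp: g'_def)
    ultimately show ?thesis by blast
  qed
  moreover have "g' x \<le> g' y" if "x \<le> y" for x y
  proof -
    have "g z \<in> {a..b}" if "z \<in> {a..b}" for z using onto that by blast
    then show ?thesis
      using \<open>x \<le> y\<close> mono_onD[OF mono, of x y] by (fastforce simp: g'_def)
  qed
  ultimately have "continuous_on UNIV g'"
    by (intro continuous_onI_mono) auto
  then have "continuous_on {a..b} g'" by (rule continuous_on_subset) simp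
  then show ?thesis by (rule continuous_on_cong[THEN iffD1, rotated 2]) (simp_all add: g'_def)
qed

locale unit_automorphism =
  fixes \<phi> :: "real \<Rightarrow> real"
  assumes strict_mono: "strict_mono_on {0..1} \<phi>"
    and bij: "bij_betw \<phi> {0..1} {0..1}"
begin

lemma image_eq: "\<phi> ` {0..1} = {0..1}"
  using bij by (simp add: bij_betw_def)

lemma in_unit: "x \<in> {0..1} \<Longrightarrow> \<phi> x \<in> {0..1}"
  using image_eq by auto

lemma mono: "x \<in> {0..1} \<Longrightarrow> y \<in> {0..1} \<Longrightarrow> x \<le> y \<Longrightarrow> \<phi> x \<le> \<phi> y"
  by (rule strict_mono_on_leD[OF strict_mono])

lemma map_0 [simp]: "\<phi> 0 = 0"
proof -
  obtain z where "z \<in> {0..1}" "\<phi> z = 0" using image_eq by (metis atLeastAtMost_iff imageE order_refl zero_le_one)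
  then show ?thesis using mono[of 0 z] in_unit[of 0] by auto
qed

lemma map_1 [simp]: "\<phi> 1 = 1"
proof -
  obtain z where "z \<in> {0..1}" "\<phi> z = 1" using image_eq by (metis atLeastAtMost_iff imageE order_refl zero_le_one)
  then show ?thesis using mono[of z 1] in_unit[of 1] by auto
qed

lemma eq_0_iff: "x \<in> {0..1} \<Longrightarrow> \<phi> x = 0 \<longleftrightarrow> x = 0"
  using strict_mono_on_eq[OF strict_mono, of x 0] by simp

lemma eq_1_iff: "x \<in> {0..1} \<Longrightarrow> \<phi> x = 1 \<longleftrightarrow> x = 1"
  using strict_mono_on_eq[OF strict_mono, of x 1] by simp

lemma continuous: "continuous_on {0..1} \<phi>"
  by (rule mono_on_onto_imp_continuous_on[OF strict_mono_on_imp_mono_on[OF strict_mono] image_eq])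

lemma inv_into_inverse: "x \<in> {0..1} \<Longrightarrow> inv_into {0..1} \<phi> (\<phi> x) = x"
  using bij by (simp add: bij_betw_def)

lemma inverse_inv_into: "y \<in> {0..1} \<Longrightarrow> \<phi> (inv_into {0..1} \<phi> y) = y"
  using image_eq by (simp add: f_inv_into_f)

lemma inv_into_in_unit: "y \<in> {0..1} \<Longrightarrow> inv_into {0..1} \<phi> y \<in> {0..1}"
  using image_eq by (metis inv_into_into)

lemma inv_into_automorphism: "unit_automorphism (inv_into {0..1} \<phi>)"
proof
  show "bij_betw (inv_into {0..1} \<phi>) {0..1} {0..1}" by (rule bij_betw_inv_into[OF bij])
  show "strict_mono_on {0..1} (inv_into {0..1} \<phi>)"
  proof (rule strict_mono_onI)
    fix v w :: real assume vw: "v \<in> {0..1}" "w \<in> {0..1}" "v < w"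
    then have "\<phi> (inv_into {0..1} \<phi> v) < \<phi> (inv_into {0..1} \<phi> w)"
      by (simp add: inverse_inv_into)
    then show "inv_into {0..1} \<phi> v < inv_into {0..1} \<phi> w"
      using strict_mono_on_less[OF strict_mono inv_into_in_unit inv_into_in_unit] vw by blast
  qed
qed

lemma prob_sum_map_in_unit: "x \<in> {0..1} \<Longrightarrow> y \<in> {0..1} \<Longrightarrow> prob_sum (\<phi> x) (\<phi> y) \<in> {0..1}"
  by (rule prob_sum_in_unit[OF in_unit in_unit])

lemma prob_sum_map_mono_left:
  assumes "x \<in> {0..1}" "x' \<in> {0..1}" "y \<in> {0..1}" "x \<le> x'"
  shows "prob_sum (\<phi> x) (\<phi> y) \<le> prob_sum (\<phi> x') (\<phi> y)"
proof (rule prob_sum_mono_left)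
  show "\<phi> y \<le> 1" using in_unit[OF assms(3)] by simp
  show "\<phi> x \<le> \<phi> x'" using assms(1,2,4) by (rule mono)
qed

lemma prob_sum_map_image: "(\<lambda>(x, y). prob_sum (\<phi> x) (\<phi> y)) ` ({0..1} \<times> {0..1}) \<subseteq> {0..1}"
proof (rule image_subsetI)
  fix p :: "real \<times> real" assume "p \<in> {0..1} \<times> {0..1}"
  then show "(\<lambda>(x, y). prob_sum (\<phi> x) (\<phi> y)) p \<in> {0..1}"
  proof (rule SigmaE)
    fix x y assume "x \<in> {0..1}" "y \<in> {0..1}" "p = (x, y)"
    then show ?thesis by (simp only: case_prod_conv prob_sum_map_in_unit)
  qed
qed

lemma continuous_on_prob_sum_map: "continuous_on ({0..1} \<times> {0..1}) (\<lambda>(x, y). prob_sum (\<phi> x) (\<phi> y))"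
proof -
  have "continuous_on ({0..1} \<times> {0..1}) (\<lambda>p. \<phi> (fst p))"
    by (rule continuous_on_compose2[OF continuous continuous_on_fst[OF continuous_on_id]]) auto
  moreover have "continuous_on ({0..1} \<times> {0..1}) (\<lambda>p. \<phi> (snd p))"
    by (rule continuous_on_compose2[OF continuous continuous_on_snd[OF continuous_on_id]]) auto
  ultimately show ?thesis unfolding case_prod_beta by (rule continuous_on_prob_sum)
qed

lemma pseudo_automorphism_comp:
  assumes "pseudo_automorphism H"
  shows "pseudo_automorphism (\<lambda>x. H (\<phi> x))"
proof -
  have H: "\<And>v. v \<in> {0..1} \<Longrightarrow> H v \<in> {0..1}" "continuous_on {0..1} H" "mono_on {0..1} H"
    "\<And>v. v \<in> {0..1} \<Longrightarrow> H v = 1 \<longleftrightarrow> v = 1" "\<And>v. v \<in> {0..1} \<Longrightarrow> H v = 0 \<longleftrightarrow> v = 0"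
    using assms by (simp_all add: pseudo_automorphism_def)
  show ?thesis
    unfolding pseudo_automorphism_def
  proof (intro conjI ballI)
    show "continuous_on {0..1} (\<lambda>x. H (\<phi> x))"
      by (rule continuous_on_compose2[OF H(2) continuous image_subsetI[OF in_unit]])
    show "mono_on {0..1} (\<lambda>x. H (\<phi> x))"
    proof (rule mono_onI)
      fix x y :: real assume xy: "x \<in> {0..1}" "y \<in> {0..1}" "x \<le> y"
      then have "\<phi> x \<le> \<phi> y" by (rule mono)
      then show "H (\<phi> x) \<le> H (\<phi> y)" by (rule mono_onD[OF H(3) in_unit[OF xy(1)] in_unit[OF xy(2)]])
    qed
  next
    fix x :: real assume x: "x \<in> {0..1}"
    then have "\<phi> x \<in> {0..1}" by (rule in_unit)
    then show "H (\<phi> x) \<in> {0..1}" "H (\<phi> x) = 1 \<longleftrightarrow> x = 1" "H (\<phi> x) = 0 \<longleftrightarrow> x = 0"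
      using H(1,4,5) eq_0_iff[OF x] eq_1_iff[OF x] by simp_all
  qed
qed

end

lemma unit_automorphismI:
  assumes strict_mono: "strict_mono_on {0..1} \<phi>" and "continuous_on {0..1} \<phi>" "\<phi> 0 = 0" "\<phi> 1 = 1"
  shows "unit_automorphism \<phi>"
proof
  have "\<phi> ` {0..1} = {0..1}"
  proof
    show "\<phi> ` {0..1} \<subseteq> {0..1}"
    proof
      fix y assume "y \<in> \<phi> ` {0..1}"
      then obtain x where "x \<in> {0..1}" "y = \<phi> x" by blast
      then have "\<phi> 0 \<le> y" "y \<le> \<phi> 1" by (simp_all add: strict_mono_on_leD[OF strict_mono])
      then show "y \<in> {0..1}" using assms by simp
    qed
    show "{0..1} \<subseteq> \<phi> ` {0..1}"
    proof
      fix y :: real assume "y \<in> {0..1}"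
      then obtain x where "0 \<le> x" "x \<le> 1" "\<phi> x = y" using IVT'[of \<phi> 0 y 1] assms by auto
      then show "y \<in> \<phi> ` {0..1}" by auto
    qed
  qed
  with strict_mono show "bij_betw \<phi> {0..1} {0..1}" by (simp add: bij_betw_def strict_mono_on_imp_inj_on)
qed (rule strict_mono)

lemma unit_automorphism_rescale:
  fixes p :: "real \<Rightarrow> real"
  assumes "continuous_on {0..1} p" "strict_mono_on {0..1} p" "p 1 = 1"
  shows "unit_automorphism (\<lambda>x. 1 - (1 - p x) / (1 - p 0))"
proof -
  have "p 0 < 1" using strict_mono_onD[OF assms(2), of 0 1] assms(3) by simp
  show ?thesis
  proof (rule unit_automorphismI)
    show "strict_mono_on {0..1} (\<lambda>x. 1 - (1 - p x) / (1 - p 0))"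
      using \<open>p 0 < 1\<close> by (intro strict_mono_onI) (simp add: divide_strict_right_mono strict_mono_onD[OF assms(2)])
    show "continuous_on {0..1} (\<lambda>x. 1 - (1 - p x) / (1 - p 0))"
      using \<open>p 0 < 1\<close> by (intro continuous_intros assms(1)) simp
  qed (use \<open>p 0 < 1\<close> assms(3) in simp_all)
qed

section \<open>Strict t-conorms are isomorphic to the probabilistic sum\<close>

lemma dyadic_floor_le: "0 \<le> r \<Longrightarrow> real (nat \<lfloor>r * 2 ^ k\<rfloor>) / 2 ^ k \<le> r"
  by (simp add: field_simps)

lemma less_dyadic_floor_Suc: "0 \<le> r \<Longrightarrow> r < (real (nat \<lfloor>r * 2 ^ k\<rfloor>) + 1) / 2 ^ k"
  by (simp add: field_simps) linarith

lemma dyadic_floor_tendsto: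
  assumes "0 \<le> r"
  shows "(\<lambda>k. real (nat \<lfloor>r * 2 ^ k\<rfloor>) / 2 ^ k) \<longlonglongrightarrow> r"
proof (rule tendsto_sandwich[of "\<lambda>k. r - (1/2) ^ k" _ _ "\<lambda>k. r"])
  have "r - (1/2) ^ k \<le> real (nat \<lfloor>r * 2 ^ k\<rfloor>) / 2 ^ k" for k
    using less_dyadic_floor_Suc[OF assms, of k] unfolding add_divide_distrib power_one_over by linarith
  then show "\<forall>\<^sub>F k in sequentially. r - (1/2) ^ k \<le> real (nat \<lfloor>r * 2 ^ k\<rfloor>) / 2 ^ k"
    by simp
  show "\<forall>\<^sub>F k in sequentially. real (nat \<lfloor>r * 2 ^ k\<rfloor>) / 2 ^ k \<le> r"
    by (intro always_eventually allI dyadic_floor_le assms)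
  have "(\<lambda>k. r - (1/2::real) ^ k) \<longlonglongrightarrow> r - 0"
    by (intro tendsto_intros LIMSEQ_realpow_zero) auto
  then show "(\<lambda>k. r - (1/2::real) ^ k) \<longlonglongrightarrow> r" by simp
qed simp

locale strict_tconorm =
  fixes S :: "real \<Rightarrow> real \<Rightarrow> real"
  assumes strict_t_conorm: "strict_t_conorm S"
begin

lemma in_unit: "x \<in> {0..1} \<Longrightarrow> y \<in> {0..1} \<Longrightarrow> S x y \<in> {0..1}"
  using strict_t_conorm unfolding strict_t_conorm_def t_conorm_def by blast

lemma commute: "x \<in> {0..1} \<Longrightarrow> y \<in> {0..1} \<Longrightarrow> S x y = S y x"
  using strict_t_conorm unfolding strict_t_conorm_def t_conorm_def by blast

lemma assoc: "x \<in> {0..1} \<Longrightarrow> y \<in> {0..1} \<Longrightarrow> z \<in> {0..1} \<Longrightarrow> S (S x y) z = S x (S y z)"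
  using strict_t_conorm unfolding strict_t_conorm_def t_conorm_def by blast

lemma mono_right: "x \<in> {0..1} \<Longrightarrow> y \<in> {0..1} \<Longrightarrow> y' \<in> {0..1} \<Longrightarrow> y \<le> y' \<Longrightarrow> S x y \<le> S x y'"
  using strict_t_conorm unfolding strict_t_conorm_def t_conorm_def by blast

lemma right_neutral [simp]: "x \<in> {0..1} \<Longrightarrow> S x 0 = x"
  using strict_t_conorm unfolding strict_t_conorm_def t_conorm_def by blast

lemma left_neutral [simp]: "x \<in> {0..1} \<Longrightarrow> S 0 x = x"
  using commute[of 0 x] by simp

lemma continuous: "continuous_on ({0..1} \<times> {0..1}) (\<lambda>(x, y). S x y)"
  using strict_t_conorm unfolding strict_t_conorm_def by blast

lemma strict_mono_left:
  "x \<in> {0..1} \<Longrightarrow> x' \<in> {0..1} \<Longrightarrow> y \<in> {0..1} \<Longrightarrow> y < 1 \<Longrightarrow> x < x' \<Longrightarrow> S x y < S x' y"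
  using strict_t_conorm unfolding strict_t_conorm_def by blast

lemma strict_mono_right:
  "x \<in> {0..1} \<Longrightarrow> y \<in> {0..1} \<Longrightarrow> y' \<in> {0..1} \<Longrightarrow> x < 1 \<Longrightarrow> y < y' \<Longrightarrow> S x y < S x y'"
  using strict_mono_left[of y y' x] commute by simp

lemma left_absorb [simp]: "y \<in> {0..1} \<Longrightarrow> S 1 y = 1"
  using mono_right[of 1 0 y] in_unit[of 1 y] by auto

lemma right_absorb [simp]: "y \<in> {0..1} \<Longrightarrow> S y 1 = 1"
  using commute[of y 1] by simp

lemma less_1: "x \<in> {0..1} \<Longrightarrow> y \<in> {0..1} \<Longrightarrow> x < 1 \<Longrightarrow> y < 1 \<Longrightarrow> S x y < 1"
  using strict_mono_left[of x 1 y] by simp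

lemma le_S: "x \<in> {0..1} \<Longrightarrow> y \<in> {0..1} \<Longrightarrow> x \<le> S x y"
  using mono_right[of x 0 y] by simp

lemma less_S: "x \<in> {0..1} \<Longrightarrow> y \<in> {0..1} \<Longrightarrow> x < 1 \<Longrightarrow> 0 < y \<Longrightarrow> x < S x y"
  using strict_mono_right[of x 0 y] by simp

lemma tendsto:
  assumes "f \<longlonglongrightarrow> a" "g \<longlonglongrightarrow> b" "\<And>n. f n \<in> {0..1}" "\<And>n. g n \<in> {0..1}"
    "a \<in> {0..1}" "b \<in> {0..1}"
  shows "(\<lambda>n. S (f n) (g n)) \<longlonglongrightarrow> S a b"
proof -
  have "(\<lambda>n. (\<lambda>(x, y). S x y) (f n, g n)) \<longlonglongrightarrow> (\<lambda>(x, y). S x y) (a, b)"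
    by (rule continuous_on_tendsto_compose[OF continuous]) (use assms in \<open>auto intro!: tendsto_Pair\<close>)
  then show ?thesis by simp
qed

lemma small_increment:
  assumes "0 < e"
  obtains \<delta> where "0 < \<delta>" "\<And>x y. x \<in> {0..1} \<Longrightarrow> y \<in> {0..1} \<Longrightarrow> y < \<delta> \<Longrightarrow> S x y < x + e"
proof -
  have "uniformly_continuous_on ({0..1} \<times> {0..1}) (\<lambda>(x, y). S x y)"
    by (rule compact_uniformly_continuous[OF continuous]) (intro compact_Times compact_Icc)
  then obtain \<delta> where "0 < \<delta>" and \<delta>: "\<And>p p'. p \<in> {0..1} \<times> {0..1} \<Longrightarrow> p' \<in> {0..1} \<times> {0..1} \<Longrightarrow>
      dist p' p < \<delta> \<Longrightarrow> dist ((\<lambda>(x, y). S x y) p') ((\<lambda>(x, y). S x y) p) < e"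
    unfolding uniformly_continuous_on_def using assms by metis
  have "S x y < x + e" if "x \<in> {0..1}" "y \<in> {0..1}" "y < \<delta>" for x y
    using \<delta>[of "(x, 0)" "(x, y)"] that by (simp add: dist_Pair_Pair dist_real_def)
  with \<open>0 < \<delta>\<close> show thesis by (rule that)
qed

definition npow :: "real \<Rightarrow> nat \<Rightarrow> real" where
  "npow x n = (S x ^^ n) 0"

lemma npow_0 [simp]: "npow x 0 = 0"
  by (simp add: npow_def)

lemma npow_Suc: "npow x (Suc n) = S x (npow x n)"
  by (simp add: npow_def)

lemma npow_in_unit:
  assumes "x \<in> {0..1}"
  shows "npow x n \<in> {0..1}"
proof (induction n)
  case (Suc n)
  with assms show ?case unfolding npow_Suc by (rule in_unit)
qed simp

lemma npow_less_1:
  assumes "x \<in> {0..1}" "x < 1"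
  shows "npow x n < 1"
proof (induction n)
  case (Suc n)
  with assms show ?case unfolding npow_Suc by (intro less_1 npow_in_unit)
qed simp

lemma npow_add:
  assumes "x \<in> {0..1}"
  shows "npow x (m + n) = S (npow x m) (npow x n)"
proof (induction m)
  case 0
  show ?case using npow_in_unit[OF assms] by simp
next
  case (Suc m)
  then show ?case using assoc[OF assms npow_in_unit[OF assms] npow_in_unit[OF assms]]
    by (simp add: npow_Suc)
qed

lemma npow_mult:
  assumes "x \<in> {0..1}"
  shows "npow x (m * n) = npow (npow x m) n"
proof (induction n)
  case (Suc n)
  have "npow x (m * Suc n) = npow x (m + m * n)" by simp
  then show ?case by (simp add: npow_add[OF assms] Suc npow_Suc)
qed simp

lemma npow_1: "x \<in> {0..1} \<Longrightarrow> npow x 1 = x"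
  by (simp add: npow_Suc[of x 0, simplified])

lemma npow_2: "x \<in> {0..1} \<Longrightarrow> npow x 2 = S x x"
  by (simp add: numeral_2_eq_2 npow_Suc)

lemma npow_Suc_commute:
  assumes "x \<in> {0..1}"
  shows "npow x (Suc n) = S (npow x n) x"
  using commute[OF assms npow_in_unit[OF assms]] by (simp add: npow_Suc)

lemma npow_strict_mono:
  assumes "x \<in> {0..1}" "0 < x" "x < 1"
  shows "strict_mono (npow x)"
proof (rule strict_mono_Suc_iff[THEN iffD2], intro allI)
  fix n
  show "npow x n < npow x (Suc n)"
    unfolding npow_Suc_commute[OF assms(1)] using assms by (intro less_S npow_in_unit npow_less_1)
qed

lemma npow_unbounded:
  assumes "x \<in> {0..1}" "0 < x" "y < 1"
  obtains n where "y < npow x n"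
proof (rule ccontr)
  assume "\<not> thesis"
  with that have bounded: "npow x n \<le> y" for n by (meson not_less)
  have "incseq (npow x)"
    unfolding incseq_Suc_iff npow_Suc_commute[OF assms(1)] using assms by (intro allI le_S npow_in_unit)
  moreover have bdd: "bdd_above (range (npow x))" using bounded by (intro bdd_aboveI[of _ y]) auto
  ultimately have lim: "npow x \<longlonglongrightarrow> (SUP n. npow x n)" by (rule LIMSEQ_incseq_SUP[rotated])
  define L where "L = (SUP n. npow x n)"
  have "x \<le> L" using cSUP_upper[OF _ bdd, of 1] npow_1[OF assms(1)] by (simp add: L_def)
  moreover have "L \<le> y" using bounded by (simp add: L_def cSUP_least)
  ultimately have L: "L \<in> {0..1}" "L < 1" using assms by auto
  have "(\<lambda>n. S (npow x n) x) \<longlonglongrightarrow> S L x"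
    using lim assms L by (intro tendsto npow_in_unit) (simp_all add: L_def)
  moreover have "(\<lambda>n. S (npow x n) x) \<longlonglongrightarrow> L"
    using LIMSEQ_Suc[OF lim] by (simp add: npow_Suc_commute[OF assms(1)] L_def)
  ultimately have "S L x = L" by (rule LIMSEQ_unique)
  with less_S[OF L(1) assms(1) L(2) assms(2)] show False by simp
qed

lemma diagonal_strict_mono: "strict_mono_on {0..1} (\<lambda>z. S z z)"
proof (rule strict_mono_onI)
  fix z z' :: real assume z: "z \<in> {0..1}" "z' \<in> {0..1}" "z < z'"
  show "S z z < S z' z'"
  proof (cases "z' = 1")
    case True
    then show ?thesis using z less_1[of z z] by simp
  next
    case False
    with z have "S z z < S z' z" by (intro strict_mono_left) auto
    also have "\<dots> \<le> S z' z'" using z by (intro mono_right) auto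
    finally show ?thesis .
  qed
qed

lemma ex1_square_root:
  assumes "y \<in> {0..1}"
  shows "\<exists>!z. z \<in> {0..1} \<and> S z z = y"
proof (rule ex_ex1I)
  have "continuous_on {0..1} (\<lambda>z. (\<lambda>(x, y). S x y) (z, z))"
    by (rule continuous_on_compose2[OF continuous continuous_on_Pair[OF continuous_on_id continuous_on_id]]) auto
  then show "\<exists>z. z \<in> {0..1} \<and> S z z = y"
    using IVT'[of "\<lambda>z. S z z" 0 y 1] assms by auto
qed (metis strict_mono_on_eq[OF diagonal_strict_mono])

definition square_root :: "real \<Rightarrow> real" where
  "square_root y = (THE z. z \<in> {0..1} \<and> S z z = y)"

lemma square_root: "y \<in> {0..1} \<Longrightarrow> square_root y \<in> {0..1} \<and> S (square_root y) (square_root y) = y"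
  unfolding square_root_def by (rule theI') (rule ex1_square_root)

lemma square_root_between_0_1: "0 < y \<Longrightarrow> y < 1 \<Longrightarrow> 0 < square_root y \<and> square_root y < 1"
  using square_root[of y] by (cases "square_root y = 0 \<or> square_root y = 1") auto

(* The 2^k-fold S-power of half_root k is 1/2, so dyadic_pow k m is the value the S-power of 1/2
   with exponent m/2^k must take; real_pow extends it monotonically to all exponents r >= 0.
   It is a continuous isomorphism from [0,oo) with + onto [0,1) with S, i.e. the inverse of an
   additive generator of S. *)

definition half_root :: "nat \<Rightarrow> real" where
  "half_root k = (square_root ^^ k) (1/2)"

lemma half_root_0 [simp]: "half_root 0 = 1/2"
  by (simp add: half_root_def)

lemma half_root_Suc: "half_root (Suc k) = square_root (half_root k)"
  by (simp add: half_root_def)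

lemma half_root_between_0_1: "0 < half_root k \<and> half_root k < 1"
  by (induction k) (simp_all add: half_root_Suc square_root_between_0_1)

lemma half_root_in_unit: "half_root k \<in> {0..1}"
  using half_root_between_0_1[of k] by simp

lemma half_root_square: "S (half_root (Suc k)) (half_root (Suc k)) = half_root k"
  using square_root[OF half_root_in_unit] by (simp add: half_root_Suc)

lemma half_root_small:
  assumes "0 < e"
  obtains k where "half_root k < e"
proof (rule ccontr)
  assume "\<not> thesis"
  with that have bounded: "e \<le> half_root k" for k by (meson not_less)
  have "decseq half_root"
    unfolding decseq_Suc_iff by (metis le_S half_root_in_unit half_root_square)
  moreover have bdd: "bdd_below (range half_root)" using bounded by (intro bdd_belowI[of _ e]) auto
  ultimately have lim: "half_root \<longlonglongrightarrow> (INF k. half_root k)" by (rule LIMSEQ_decseq_INF[rotated])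
  define L where "L = (INF k. half_root k)"
  have "e \<le> L" using bounded by (simp add: L_def cINF_greatest)
  moreover have "L \<le> half_root 0" using cINF_lower[OF bdd, of 0] by (simp add: L_def)
  ultimately have L: "L \<in> {0..1}" "0 < L" "L < 1" using assms half_root_between_0_1[of 0] by auto
  have "(\<lambda>k. S (half_root (Suc k)) (half_root (Suc k))) \<longlonglongrightarrow> S L L"
    using LIMSEQ_Suc[OF lim] L by (intro tendsto half_root_in_unit) (simp_all add: L_def)
  moreover have "(\<lambda>k. S (half_root (Suc k)) (half_root (Suc k))) \<longlonglongrightarrow> L"
    unfolding half_root_square using lim by (simp add: L_def)
  ultimately have "S L L = L" by (rule LIMSEQ_unique)
  with less_S[OF L(1) L(1) L(3) L(2)] show False by simp
qed

definition dyadic_pow :: "nat \<Rightarrow> nat \<Rightarrow> real" where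
  "dyadic_pow k m = npow (half_root k) m"

lemma dyadic_pow_in_unit: "dyadic_pow k m \<in> {0..1}"
  unfolding dyadic_pow_def by (rule npow_in_unit[OF half_root_in_unit])

lemma dyadic_pow_less_1: "dyadic_pow k m < 1"
  unfolding dyadic_pow_def using half_root_between_0_1 by (intro npow_less_1 half_root_in_unit) auto

lemma dyadic_pow_add: "dyadic_pow k (m + n) = S (dyadic_pow k m) (dyadic_pow k n)"
  unfolding dyadic_pow_def by (rule npow_add[OF half_root_in_unit])

lemma dyadic_pow_Suc_double: "dyadic_pow (Suc k) (2 * m) = dyadic_pow k m"
  unfolding dyadic_pow_def npow_mult[OF half_root_in_unit] npow_2[OF half_root_in_unit] half_root_square ..

lemma dyadic_pow_Suc_2: "dyadic_pow (Suc k) 2 = half_root k"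
proof -
  have "dyadic_pow (Suc k) 2 = dyadic_pow k 1" using dyadic_pow_Suc_double[of k 1] by simp
  also have "\<dots> = half_root k" unfolding dyadic_pow_def by (rule npow_1[OF half_root_in_unit])
  finally show ?thesis .
qed

lemma dyadic_pow_refine: "dyadic_pow (k + j) (m * 2 ^ j) = dyadic_pow k m"
proof (induction j)
  case (Suc j)
  have "m * 2 ^ Suc j = 2 * (m * 2 ^ j)" by simp
  then show ?case by (simp only: add_Suc_right dyadic_pow_Suc_double Suc)
qed simp

lemma dyadic_pow_strict_mono: "strict_mono (dyadic_pow k)"
  unfolding dyadic_pow_def using half_root_between_0_1 half_root_in_unit by (intro npow_strict_mono) auto

lemma dyadic_pow_le:
  assumes "real m / 2 ^ k \<le> real m' / 2 ^ k'"
  shows "dyadic_pow k m \<le> dyadic_pow k' m'"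
proof -
  have "real (m * 2 ^ k') \<le> real (m' * 2 ^ k)"
    using assms by (simp add: field_simps)
  then have "m * 2 ^ k' \<le> m' * 2 ^ k" by linarith
  then have "dyadic_pow (k + k') (m * 2 ^ k') \<le> dyadic_pow (k' + k) (m' * 2 ^ k)"
    by (simp add: add.commute strict_mono_less_eq[OF dyadic_pow_strict_mono])
  then show ?thesis by (simp only: dyadic_pow_refine)
qed

definition real_pow :: "real \<Rightarrow> real" where
  "real_pow r = (SUP k. dyadic_pow k (nat \<lfloor>r * 2 ^ k\<rfloor>))"

lemma bdd_above_dyadic_approx: "bdd_above (range (\<lambda>k. dyadic_pow k (nat \<lfloor>r * 2 ^ k\<rfloor>)))"
  using dyadic_pow_in_unit by (intro bdd_aboveI[of _ 1]) auto

lemma dyadic_approx_le_real_pow: "dyadic_pow k (nat \<lfloor>r * 2 ^ k\<rfloor>) \<le> real_pow r"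
  unfolding real_pow_def by (rule cSUP_upper[OF _ bdd_above_dyadic_approx]) simp

lemma real_pow_le: "(\<And>k. dyadic_pow k (nat \<lfloor>r * 2 ^ k\<rfloor>) \<le> B) \<Longrightarrow> real_pow r \<le> B"
  unfolding real_pow_def by (rule cSUP_least) auto

lemma real_pow_dyadic: "real_pow (real m / 2 ^ k) = dyadic_pow k m"
proof (rule antisym)
  show "real_pow (real m / 2 ^ k) \<le> dyadic_pow k m"
    by (intro real_pow_le dyadic_pow_le dyadic_floor_le) simp
  show "dyadic_pow k m \<le> real_pow (real m / 2 ^ k)"
    using dyadic_approx_le_real_pow[of k "real m / 2 ^ k"] by simp
qed

lemma real_pow_0 [simp]: "real_pow 0 = 0"
  using real_pow_dyadic[of 0 0] by (simp add: dyadic_pow_def)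

lemma real_pow_of_nat: "real_pow (real n) = npow (1/2) n"
  using real_pow_dyadic[of n 0] by (simp add: dyadic_pow_def)

lemma real_pow_mono: "r \<le> r' \<Longrightarrow> real_pow r \<le> real_pow r'"
proof (rule real_pow_le)
  fix k assume "r \<le> r'"
  then have "dyadic_pow k (nat \<lfloor>r * 2 ^ k\<rfloor>) \<le> dyadic_pow k (nat \<lfloor>r' * 2 ^ k\<rfloor>)"
    by (simp add: strict_mono_less_eq[OF dyadic_pow_strict_mono] nat_mono floor_mono)
  also have "\<dots> \<le> real_pow r'" by (rule dyadic_approx_le_real_pow)
  finally show "dyadic_pow k (nat \<lfloor>r * 2 ^ k\<rfloor>) \<le> real_pow r'" .
qed

lemma real_pow_nonneg: "0 \<le> real_pow r"
  using dyadic_approx_le_real_pow[of 0 r] dyadic_pow_in_unit[of 0 "nat \<lfloor>r * 2 ^ 0\<rfloor>"] by auto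

lemma real_pow_less_1: "real_pow r < 1"
proof -
  have "real_pow r \<le> real_pow (real (nat \<lceil>r\<rceil>))" by (rule real_pow_mono) linarith
  also have "\<dots> = dyadic_pow 0 (nat \<lceil>r\<rceil>)" using real_pow_dyadic[of _ 0] by simp
  also have "\<dots> < 1" by (rule dyadic_pow_less_1)
  finally show ?thesis .
qed

lemma real_pow_in_unit: "real_pow r \<in> {0..1}"
  using real_pow_nonneg real_pow_less_1[of r] by simp

lemma real_pow_strict_mono: "strict_mono_on {0..} real_pow"
proof (rule strict_mono_onI)
  fix r r' :: real assume "r \<in> {0..}" "r' \<in> {0..}" "r < r'"
  then have "0 \<le> r" "r < r'" by auto
  obtain k where k: "(1/2::real) ^ k < (r' - r) / 2"
    using real_arch_pow_inv[of "(r' - r) / 2" "1/2::real"] \<open>r < r'\<close> by auto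
  define n where "n = nat \<lfloor>r * 2 ^ k\<rfloor>"
  have "r < (real n + 1) / 2 ^ k" unfolding n_def by (rule less_dyadic_floor_Suc[OF \<open>0 \<le> r\<close>])
  then have "real_pow r \<le> real_pow (real (n + 1) / 2 ^ k)" by (intro real_pow_mono) (simp add: add.commute)
  also have "\<dots> = dyadic_pow k (n + 1)" by (rule real_pow_dyadic)
  also have "\<dots> < dyadic_pow k (n + 2)" by (simp add: strict_monoD[OF dyadic_pow_strict_mono])
  also have "\<dots> = real_pow (real (n + 2) / 2 ^ k)" by (rule real_pow_dyadic[symmetric])
  also have "\<dots> \<le> real_pow r'"
  proof (rule real_pow_mono)
    have "real n / 2 ^ k \<le> r" unfolding n_def by (rule dyadic_floor_le[OF \<open>0 \<le> r\<close>])
    moreover have "2 / (2::real) ^ k < r' - r" using k by (simp add: power_one_over field_simps)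
    ultimately show "real (n + 2) / 2 ^ k \<le> r'" by (simp add: add_divide_distrib add.commute)
  qed
  finally show "real_pow r < real_pow r'" .
qed

lemma real_pow_increment:
  assumes "0 < e"
  obtains k where "\<And>r r'. 0 \<le> r \<Longrightarrow> r \<le> r' \<Longrightarrow> r' < r + 1 / 2 ^ k \<Longrightarrow> real_pow r' < real_pow r + e"
proof -
  obtain \<delta> where "0 < \<delta>" and \<delta>: "\<And>x y. x \<in> {0..1} \<Longrightarrow> y \<in> {0..1} \<Longrightarrow> y < \<delta> \<Longrightarrow> S x y < x + e"
    using small_increment[OF assms] by blast
  obtain K where K: "half_root K < \<delta>" using half_root_small[OF \<open>0 < \<delta>\<close>] by blast
  have "real_pow r' < real_pow r + e"
    if r: "0 \<le> r" "r \<le> r'" "r' < r + 1 / 2 ^ Suc K" for r r'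
  proof -
    define n where "n = nat \<lfloor>r * 2 ^ Suc K\<rfloor>"
    have "r < (real n + 1) / 2 ^ Suc K" unfolding n_def by (rule less_dyadic_floor_Suc[OF r(1)])
    then have "r' \<le> real (n + 2) / 2 ^ Suc K" using r(3) by (simp add: add_divide_distrib)
    then have "real_pow r' \<le> dyadic_pow (Suc K) (n + 2)" using real_pow_mono real_pow_dyadic by metis
    also have "\<dots> = S (dyadic_pow (Suc K) n) (half_root K)" by (simp only: dyadic_pow_add dyadic_pow_Suc_2)
    also have "\<dots> < dyadic_pow (Suc K) n + e" by (intro \<delta> K dyadic_pow_in_unit half_root_in_unit)
    also have "dyadic_pow (Suc K) n \<le> real_pow r"
      unfolding n_def using dyadic_approx_le_real_pow .
    finally show ?thesis by simp
  qed
  then show thesis by (rule that)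
qed

lemma continuous_on_real_pow: "continuous_on {0..} real_pow"
  unfolding continuous_on_iff
proof (intro ballI allI impI)
  fix r e :: real assume r: "r \<in> {0..}" and "0 < e"
  obtain k where k: "\<And>r r'. 0 \<le> r \<Longrightarrow> r \<le> r' \<Longrightarrow> r' < r + 1 / 2 ^ k \<Longrightarrow> real_pow r' < real_pow r + e"
    using real_pow_increment[OF \<open>0 < e\<close>] by blast
  have "dist (real_pow r') (real_pow r) < e" if r': "r' \<in> {0..}" "dist r' r < 1 / 2 ^ k" for r'
  proof (cases "r \<le> r'")
    case True
    then show ?thesis using k[of r r'] real_pow_mono[of r r'] r r' by (simp add: dist_real_def)
  next
    case False
    then show ?thesis using k[of r' r] real_pow_mono[of r' r] r r' by (simp add: dist_real_def)
  qed
  then show "\<exists>d>0. \<forall>r'\<in>{0..}. dist r' r < d \<longrightarrow> dist (real_pow r') (real_pow r) < e"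
    by (intro exI[of _ "1 / 2 ^ k"]) simp
qed

lemma real_pow_add:
  assumes "0 \<le> r" "0 \<le> r'"
  shows "real_pow (r + r') = S (real_pow r) (real_pow r')"
proof -
  define a where "a k = real (nat \<lfloor>r * 2 ^ k\<rfloor>) / 2 ^ k" for k :: nat
  define b where "b k = real (nat \<lfloor>r' * 2 ^ k\<rfloor>) / 2 ^ k" for k :: nat
  have a: "a \<longlonglongrightarrow> r" unfolding a_def by (rule dyadic_floor_tendsto[OF assms(1)])
  have b: "b \<longlonglongrightarrow> r'" unfolding b_def by (rule dyadic_floor_tendsto[OF assms(2)])
  have nonneg: "0 \<le> a k" "0 \<le> b k" for k by (simp_all add: a_def b_def)
  have "(\<lambda>k. real_pow (a k + b k)) \<longlonglongrightarrow> real_pow (r + r')"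
    using assms nonneg
    by (intro continuous_on_tendsto_compose[OF continuous_on_real_pow tendsto_add[OF a b]]) auto
  moreover have "real_pow (a k + b k) = S (real_pow (a k)) (real_pow (b k))" for k
  proof -
    have "a k + b k = real (nat \<lfloor>r * 2 ^ k\<rfloor> + nat \<lfloor>r' * 2 ^ k\<rfloor>) / 2 ^ k"
      by (simp add: a_def b_def add_divide_distrib)
    then show ?thesis by (simp only: a_def b_def real_pow_dyadic dyadic_pow_add)
  qed
  moreover have "(\<lambda>k. S (real_pow (a k)) (real_pow (b k))) \<longlonglongrightarrow> S (real_pow r) (real_pow r')"
    using assms nonneg
    by (intro tendsto real_pow_in_unit continuous_on_tendsto_compose[OF continuous_on_real_pow] a b) auto
  ultimately show ?thesis using LIMSEQ_unique by simp
qed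

lemma real_pow_image: "real_pow ` {0..} = {0..<1}"
proof
  show "real_pow ` {0..} \<subseteq> {0..<1}" using real_pow_nonneg real_pow_less_1 by auto
  show "{0..<1} \<subseteq> real_pow ` {0..}"
  proof
    fix y :: real assume "y \<in> {0..<1}"
    then obtain n where "y < npow (1/2) n" using npow_unbounded[of "1/2" y] by auto
    then have "real_pow 0 \<le> y" "y \<le> real_pow (real n)" using \<open>y \<in> {0..<1}\<close> by (simp_all add: real_pow_of_nat)
    moreover have "continuous_on {0..real n} real_pow"
      by (rule continuous_on_subset[OF continuous_on_real_pow]) auto
    ultimately obtain r where "0 \<le> r" "r \<le> real n" "real_pow r = y"
      using IVT'[of real_pow 0 y "real n"] by auto
    then show "y \<in> real_pow ` {0..}" by auto
  qed
qed

definition prob_sum_iso :: "real \<Rightarrow> real" where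
  "prob_sum_iso v = (if v < 1 then real_pow (- ln (1 - v)) else 1)"

lemma prob_sum_iso_prob_sum:
  assumes "v \<in> {0..1}" "w \<in> {0..1}"
  shows "prob_sum_iso (prob_sum v w) = S (prob_sum_iso v) (prob_sum_iso w)"
proof (cases "v = 1 \<or> w = 1")
  case True
  then have "prob_sum v w = 1" by (simp add: prob_sum_eq_1_iff)
  with True show ?thesis using real_pow_in_unit by (auto simp: prob_sum_iso_def)
next
  case False
  with assms have "v < 1" "w < 1" by auto
  moreover have "0 \<le> - ln (1 - v)" "0 \<le> - ln (1 - w)" using assms \<open>v < 1\<close> \<open>w < 1\<close> by auto
  ultimately show ?thesis
    by (simp add: prob_sum_iso_def prob_sum_less_1 ln_one_minus_prob_sum real_pow_add[symmetric])
qed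

lemma unit_automorphism_prob_sum_iso: "unit_automorphism prob_sum_iso"
proof
  show strict_mono: "strict_mono_on {0..1} prob_sum_iso"
  proof (rule strict_mono_onI)
    fix v w :: real assume "v \<in> {0..1}" "w \<in> {0..1}" "v < w"
    then show "prob_sum_iso v < prob_sum_iso w"
      using strict_mono_onD[OF real_pow_strict_mono, of "- ln (1 - v)" "- ln (1 - w)"] real_pow_less_1
      by (auto simp: prob_sum_iso_def)
  qed
  have "prob_sum_iso ` {0..1} = {0..1}"
  proof
    show "prob_sum_iso ` {0..1} \<subseteq> {0..1}" using real_pow_in_unit by (auto simp: prob_sum_iso_def)
    show "{0..1} \<subseteq> prob_sum_iso ` {0..1}"
    proof
      fix y :: real assume y: "y \<in> {0..1}"
      show "y \<in> prob_sum_iso ` {0..1}"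
      proof (cases "y = 1")
        case True
        then show ?thesis by (auto simp: prob_sum_iso_def intro!: image_eqI[of _ _ 1])
      next
        case False
        with y real_pow_image obtain r where "0 \<le> r" "y = real_pow r" by (metis atLeastAtMost_iff
            atLeastLessThan_iff atLeast_iff imageE less_eq_real_def)
        then have "y = prob_sum_iso (1 - exp (- r))" "1 - exp (- r) \<in> {0..1}"
          by (simp_all add: prob_sum_iso_def)
        then show ?thesis by blast
      qed
    qed
  qed
  with strict_mono show "bij_betw prob_sum_iso {0..1} {0..1}"
    by (simp add: bij_betw_def strict_mono_on_imp_inj_on)
qed

end

theorem strict_t_conorm_prob_sum_iso:
  assumes "strict_t_conorm S"
  obtains \<psi> where "unit_automorphism \<psi>"
    and "\<And>v w. v \<in> {0..1} \<Longrightarrow> w \<in> {0..1} \<Longrightarrow> \<psi> (prob_sum v w) = S (\<psi> v) (\<psi> w)"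
proof -
  interpret strict_tconorm S by (rule strict_tconorm.intro[OF assms])
  show thesis by (rule that[OF unit_automorphism_prob_sum_iso prob_sum_iso_prob_sum])
qed

section \<open>Representations of grouping functions\<close>

lemma grouping_function_in_unit:
  assumes "grouping_function G" "x \<in> {0..1}" "y \<in> {0..1}"
  shows "G x y \<in> {0..1}"
proof -
  have "\<forall>x\<in>{0..1}. \<forall>y\<in>{0..1}. G x y \<in> {0..1}"
    using assms(1) unfolding grouping_function_def by (elim conjE)
  with assms(2,3) show ?thesis by blast
qed

lemma grouping_function_eq_0_iff:
  assumes "grouping_function G" "x \<in> {0..1}" "y \<in> {0..1}"
  shows "G x y = 0 \<longleftrightarrow> x = 0 \<and> y = 0"
proof -
  have "\<forall>x\<in>{0..1}. \<forall>y\<in>{0..1}. G x y = 0 \<longleftrightarrow> x = 0 \<and> y = 0"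
    using assms(1) unfolding grouping_function_def by (elim conjE)
  with assms(2,3) show ?thesis by blast
qed

lemma grouping_function_eq_1_iff:
  assumes "grouping_function G" "x \<in> {0..1}" "y \<in> {0..1}"
  shows "G x y = 1 \<longleftrightarrow> x = 1 \<or> y = 1"
proof -
  have "\<forall>x\<in>{0..1}. \<forall>y\<in>{0..1}. G x y = 1 \<longleftrightarrow> x = 1 \<or> y = 1"
    using assms(1) unfolding grouping_function_def by (elim conjE)
  with assms(2,3) show ?thesis by blast
qed

context unit_automorphism
begin

lemma grouping_function_prob_sum:
  assumes H: "pseudo_automorphism H"
    and G: "\<forall>x\<in>{0..1}. \<forall>y\<in>{0..1}. G x y = H (prob_sum (\<phi> x) (\<phi> y))"
  shows "grouping_function G"
proof -
  have H_facts: "\<And>v. v \<in> {0..1} \<Longrightarrow> H v \<in> {0..1}" "continuous_on {0..1} H" "mono_on {0..1} H"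
    "\<And>v. v \<in> {0..1} \<Longrightarrow> H v = 1 \<longleftrightarrow> v = 1" "\<And>v. v \<in> {0..1} \<Longrightarrow> H v = 0 \<longleftrightarrow> v = 0"
    using H by (simp_all add: pseudo_automorphism_def)
  have mono_left: "G x y \<le> G x' y" if "x \<in> {0..1}" "x' \<in> {0..1}" "y \<in> {0..1}" "x \<le> x'" for x x' y
    using that G mono_onD[OF H_facts(3) prob_sum_map_in_unit prob_sum_map_in_unit prob_sum_map_mono_left] by simp
  show ?thesis
    unfolding grouping_function_def
  proof (intro conjI ballI impI)
    fix x y :: real assume x: "x \<in> {0..1}" and y: "y \<in> {0..1}"
    then have sum: "prob_sum (\<phi> x) (\<phi> y) \<in> {0..1}" by (rule prob_sum_map_in_unit)
    show "G x y \<in> {0..1}" using G x y H_facts(1)[OF sum] by simp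
    show "G x y = G y x" using G x y by (simp add: prob_sum_commute)
    show "G x y = 0 \<longleftrightarrow> x = 0 \<and> y = 0"
      using G x y H_facts(5)[OF sum] prob_sum_eq_0_iff[OF in_unit in_unit, OF x y] eq_0_iff[OF x] eq_0_iff[OF y]
      by simp
    show "G x y = 1 \<longleftrightarrow> x = 1 \<or> y = 1"
      using G x y H_facts(4)[OF sum] prob_sum_eq_1_iff eq_1_iff[OF x] eq_1_iff[OF y] by simp
  next
    fix x x' y :: real assume "x \<in> {0..1}" "x' \<in> {0..1}" "y \<in> {0..1}" "x \<le> x'"
    then show "G x y \<le> G x' y" by (rule mono_left)
  next
    fix x y y' :: real assume "x \<in> {0..1}" "y \<in> {0..1}" "y' \<in> {0..1}" "y \<le> y'"
    then show "G x y \<le> G x y'" using mono_left[of y y' x] G by (simp add: prob_sum_commute)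
  next
    have "continuous_on ({0..1} \<times> {0..1}) (\<lambda>p. H ((\<lambda>(x, y). prob_sum (\<phi> x) (\<phi> y)) p))"
      by (rule continuous_on_compose2[OF H_facts(2) continuous_on_prob_sum_map])
        (rule prob_sum_map_image)
    then show "continuous_on ({0..1} \<times> {0..1}) (\<lambda>(x, y). G x y)"
      by (rule continuous_on_cong[THEN iffD1, rotated 2]) (use G in auto)
  qed
qed

lemma strict_t_conorm_conjugate:
  "strict_t_conorm (\<lambda>x y. inv_into {0..1} \<phi> (prob_sum (\<phi> x) (\<phi> y)))"
  (is "strict_t_conorm ?S")
proof -
  interpret inv: unit_automorphism "inv_into {0..1} \<phi>" by (rule inv_into_automorphism)
  have \<phi>_S: "\<phi> (?S x y) = prob_sum (\<phi> x) (\<phi> y)" if "x \<in> {0..1}" "y \<in> {0..1}" for x y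
    using that by (intro inverse_inv_into prob_sum_map_in_unit)
  have mono_left: "?S x y \<le> ?S x' y" if "x \<in> {0..1}" "x' \<in> {0..1}" "y \<in> {0..1}" "x \<le> x'" for x x' y
    using that by (intro inv.mono prob_sum_map_in_unit prob_sum_map_mono_left)
  show ?thesis
    unfolding strict_t_conorm_def t_conorm_def
  proof (intro conjI ballI impI)
    fix x y :: real assume x: "x \<in> {0..1}" and y: "y \<in> {0..1}"
    show "?S x y \<in> {0..1}" using x y by (intro inv.in_unit prob_sum_map_in_unit)
    show "?S x y = ?S y x" by (simp add: prob_sum_commute)
  next
    fix x y z :: real assume "x \<in> {0..1}" "y \<in> {0..1}" "z \<in> {0..1}"
    then show "?S (?S x y) z = ?S x (?S y z)" by (simp add: \<phi>_S prob_sum_assoc)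
  next
    fix x x' y :: real assume "x \<in> {0..1}" "x' \<in> {0..1}" "y \<in> {0..1}" "x \<le> x'"
    then show "?S x y \<le> ?S x' y" by (rule mono_left)
  next
    fix x y y' :: real assume "x \<in> {0..1}" "y \<in> {0..1}" "y' \<in> {0..1}" "y \<le> y'"
    then show "?S x y \<le> ?S x y'" using mono_left[of y y' x] by (simp add: prob_sum_commute)
  next
    fix x :: real assume "x \<in> {0..1}"
    then show "?S x 0 = x" by (simp add: inv_into_inverse)
  next
    have "continuous_on ({0..1} \<times> {0..1})
        (\<lambda>p. inv_into {0..1} \<phi> ((\<lambda>(x, y). prob_sum (\<phi> x) (\<phi> y)) p))"
      by (rule continuous_on_compose2[OF inv.continuous continuous_on_prob_sum_map])
        (rule prob_sum_map_image)
    then show "continuous_on ({0..1} \<times> {0..1}) (\<lambda>(x, y). ?S x y)"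
      by (simp add: case_prod_beta)
  next
    fix x x' y :: real assume x: "x \<in> {0..1}" "x' \<in> {0..1}" and y: "y \<in> {0..1}" and "y < 1 \<and> x < x'"
    moreover from this have "\<phi> y < 1" using in_unit[OF y] eq_1_iff[OF y] by auto
    ultimately have "prob_sum (\<phi> x) (\<phi> y) < prob_sum (\<phi> x') (\<phi> y)"
      by (intro prob_sum_strict_mono_left strict_mono_onD[OF strict_mono]) auto
    then show "?S x y < ?S x' y"
      using x y by (intro strict_mono_onD[OF inv.strict_mono] prob_sum_map_in_unit)
  qed
qed

lemma pseudo_automorphism_if_grouping_function:
  assumes G: "grouping_function G" "\<forall>x\<in>{0..1}. \<forall>y\<in>{0..1}. G x y = H (prob_sum (\<phi> x) (\<phi> y))"
    and H: "\<forall>v\<in>{0..1}. H v \<in> {0..1}" "continuous_on {0..1} H" "mono_on {0..1} H"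
  shows "pseudo_automorphism H"
  unfolding pseudo_automorphism_def
proof (intro conjI ballI)
  fix v :: real assume "v \<in> {0..1}"
  then obtain x where x: "x \<in> {0..1}" "v = \<phi> x" using image_eq by blast
  then have "H v = G x 0" using G(2) by simp
  then show "H v = 1 \<longleftrightarrow> v = 1" "H v = 0 \<longleftrightarrow> v = 0"
    using grouping_function_eq_1_iff[OF G(1) x(1), of 0] grouping_function_eq_0_iff[OF G(1) x(1), of 0]
      eq_0_iff[OF x(1)] eq_1_iff[OF x(1)] x(2) by simp_all
qed (use H in simp_all)

end

lemma additive_generator_at_1:
  fixes t :: "real \<Rightarrow> ennreal" and s :: "ennreal \<Rightarrow> real"
  assumes t: "continuous_on {0..1} t" "strict_mono_on {0..1} t" and "mono s"
    and G: "grouping_function G" "\<forall>x\<in>{0..1}. \<forall>y\<in>{0..1}. G x y = s (t x + t y)"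
  shows "t 1 = \<infinity>"
proof (rule ccontr)
  assume "t 1 \<noteq> \<infinity>"
  define x where "x n = 1 - inverse (real (Suc n))" for n
  have x: "x n \<in> {0..1}" "x n < 1" for n by (simp_all add: x_def inverse_le_1_iff)
  have "x \<longlonglongrightarrow> 1" unfolding x_def using LIMSEQ_inverse_real_of_nat_add_minus[of 1] by simp
  then have "(\<lambda>n. t (x n) + t (x n)) \<longlonglongrightarrow> t 1 + t 1"
    using x by (intro continuous_on_tendsto_compose[OF continuous_on_add[OF t(1) t(1)]]) auto
  moreover have "t 0 + t 1 < t 1 + t 1"
    using strict_mono_onD[OF t(2), of 0 1] \<open>t 1 \<noteq> \<infinity>\<close> by (simp add: ennreal_add_left_cancel_less add.commute)
  ultimately obtain n where "t 0 + t 1 < t (x n) + t (x n)"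
    by (metis (no_types, lifting) eventually_sequentially order_tendstoD(1) order_refl)
  then have "G 0 1 \<le> G (x n) (x n)" using G(2) x by (simp add: monoD[OF \<open>mono s\<close>])
  moreover have "G 0 1 = 1" by (simp add: grouping_function_eq_1_iff[OF G(1)])
  ultimately have "G (x n) (x n) = 1" using grouping_function_in_unit[OF G(1) x(1)[of n] x(1)[of n]] by simp
  then show False using grouping_function_eq_1_iff[OF G(1) x(1) x(1)] x(2)[of n] by simp
qed

definition additively_generated :: "real \<Rightarrow> (real \<Rightarrow> real \<Rightarrow> real) \<Rightarrow> bool" where
  "additively_generated a G \<longleftrightarrow>
     (\<exists>(t :: real \<Rightarrow> ennreal) (s :: ennreal \<Rightarrow> real).
       continuous_on {0..1} t \<and> strict_mono_on {0..1} t \<and>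
       continuous_on UNIV s \<and> mono s \<and> (\<forall>u. s u \<in> {0..1}) \<and>
       (\<forall>x\<in>{0..1}. \<forall>y\<in>{0..1}. G x y = s (t x + t y)) \<and>
       grouping_function G \<and>
       ((\<forall>x\<in>{0..1}. t x = ennreal (a / 2) \<longleftrightarrow> x = 0) \<or>
        (\<forall>u. s u = 0 \<longleftrightarrow> u \<le> ennreal a)))"

definition conorm_generated :: "(real \<Rightarrow> real \<Rightarrow> real) \<Rightarrow> bool" where
  "conorm_generated G \<longleftrightarrow> grouping_function G \<and>
     (\<exists>F S. pseudo_automorphism F \<and> strict_t_conorm S \<and>
        (\<forall>x\<in>{0..1}. \<forall>y\<in>{0..1}. G x y = F (S x y)))"

definition prob_sum_generated :: "(real \<Rightarrow> real \<Rightarrow> real) \<Rightarrow> bool" where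
  "prob_sum_generated G \<longleftrightarrow>
     (\<exists>\<phi> H. unit_automorphism \<phi> \<and> pseudo_automorphism H \<and>
        (\<forall>x\<in>{0..1}. \<forall>y\<in>{0..1}. G x y = H (prob_sum (\<phi> x) (\<phi> y))))"

lemma additively_generated_imp_prob_sum_generated:
  assumes "additively_generated a G"
  shows "prob_sum_generated G"
proof -
  obtain t :: "real \<Rightarrow> ennreal" and s :: "ennreal \<Rightarrow> real"
    where t: "continuous_on {0..1} t" "strict_mono_on {0..1} t"
      and s: "continuous_on UNIV s" "mono s" "\<forall>u. s u \<in> {0..1}"
      and G: "\<forall>x\<in>{0..1}. \<forall>y\<in>{0..1}. G x y = s (t x + t y)" "grouping_function G"
    using assms unfolding additively_generated_def by blast
  have "t 1 = \<infinity>" by (rule additive_generator_at_1[OF t s(2) G(2,1)])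
  define p where "p x = prob_sum_gen_inv (t x)" for x
  define c where "c = 1 - p 0"
  define \<phi> where "\<phi> x = 1 - (1 - p x) / c" for x
  define H where "H v = s (prob_sum_gen (1 - (1 - v) * c\<^sup>2))" for v
  have p: "continuous_on {0..1} p" "strict_mono_on {0..1} p" "p 1 = 1"
  proof -
    show "continuous_on {0..1} p"
      unfolding p_def by (rule continuous_on_compose2[OF continuous_on_prob_sum_gen_inv t(1)]) simp
    show "strict_mono_on {0..1} p"
      unfolding p_def by (intro strict_mono_onI strict_monoD[OF prob_sum_gen_inv_strict_mono] strict_mono_onD[OF t(2)])
    show "p 1 = 1" by (simp add: p_def \<open>t 1 = \<infinity>\<close> prob_sum_gen_inv_def)
  qed
  then have "0 < c" using strict_mono_onD[OF p(2), of 0 1] by (simp add: c_def)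
  have \<phi>: "unit_automorphism \<phi>"
    unfolding \<phi>_def[abs_def] c_def by (rule unit_automorphism_rescale[OF p])
  (* In the variable 1 - v, in which the probabilistic sum is multiplication, phi divides by c;
     H multiplies back by c^2. *)
  have rep: "\<forall>x\<in>{0..1}. \<forall>y\<in>{0..1}. G x y = H (prob_sum (\<phi> x) (\<phi> y))"
  proof (intro ballI)
    fix x y :: real assume "x \<in> {0..1}" "y \<in> {0..1}"
    have "(1 - prob_sum (\<phi> x) (\<phi> y)) * c\<^sup>2 = (1 - p x) * (1 - p y)"
      using \<open>0 < c\<close> by (simp add: one_minus_prob_sum \<phi>_def power2_eq_square)
    then have "1 - (1 - prob_sum (\<phi> x) (\<phi> y)) * c\<^sup>2 = prob_sum (p x) (p y)"
      using one_minus_prob_sum[of "p x" "p y"] by linarith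
    also have "\<dots> = prob_sum_gen_inv (t x + t y)" by (simp add: p_def prob_sum_gen_inv_add)
    finally show "G x y = H (prob_sum (\<phi> x) (\<phi> y))"
      using G(1) \<open>x \<in> {0..1}\<close> \<open>y \<in> {0..1}\<close> by (simp add: H_def prob_sum_gen_inv_inverse)
  qed
  have "pseudo_automorphism H"
  proof (rule unit_automorphism.pseudo_automorphism_if_grouping_function[OF \<phi> G(2) rep])
    show "\<forall>v\<in>{0..1}. H v \<in> {0..1}" using s(3) by (simp add: H_def)
    show "continuous_on {0..1} H" unfolding H_def
      by (intro continuous_on_compose2[OF s(1) continuous_on_compose2[OF continuous_on_prob_sum_gen]]
          continuous_intros) auto
    show "mono_on {0..1} H"
      by (intro mono_onI) (simp add: H_def monoD[OF s(2)] monoD[OF prob_sum_gen_mono] mult_right_mono)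
  qed
  with \<phi> rep show ?thesis unfolding prob_sum_generated_def by blast
qed

lemma prob_sum_generated_imp_additively_generated:
  assumes "0 \<le> a" "prob_sum_generated G"
  shows "additively_generated a G"
proof -
  obtain \<phi> H where \<phi>: "unit_automorphism \<phi>" and H: "pseudo_automorphism H"
    and G: "\<forall>x\<in>{0..1}. \<forall>y\<in>{0..1}. G x y = H (prob_sum (\<phi> x) (\<phi> y))"
    using assms(2) unfolding prob_sum_generated_def by blast
  interpret unit_automorphism \<phi> by (rule \<phi>)
  have H_facts: "\<And>v. v \<in> {0..1} \<Longrightarrow> H v \<in> {0..1}" "continuous_on {0..1} H" "mono_on {0..1} H"
    using H by (simp_all add: pseudo_automorphism_def)
  define t where "t x = ennreal (a / 2) + prob_sum_gen (\<phi> x)" for x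
  define r where "r u = max 0 (1 - exp a * (1 - prob_sum_gen_inv u))" for u
  define s where "s u = H (r u)" for u
  (* Shifting the generator by a/2 shifts t x + t y by a, which r undoes
     (prob_sum_gen_inv_shift); the shift is what makes condition (a) hold. *)
  have r_in_unit: "r u \<in> {0..1}" for u
    using prob_sum_gen_inv_in_unit[of u] by (simp add: r_def)
  have "G x y = s (t x + t y)" if "x \<in> {0..1}" "y \<in> {0..1}" for x y
  proof -
    have "t x + t y = ennreal a + prob_sum_gen (prob_sum (\<phi> x) (\<phi> y))"
      using assms(1) prob_sum_gen_prob_sum[OF in_unit[OF that(1)] in_unit[OF that(2)]]
      by (simp add: t_def ennreal_plus[symmetric] add_ac del: ennreal_plus)
    then have "r (t x + t y) = prob_sum (\<phi> x) (\<phi> y)"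
      using prob_sum_gen_inv_shift[OF assms(1) prob_sum_map_in_unit[OF that]] prob_sum_map_in_unit[OF that]
      by (simp add: r_def)
    then show ?thesis using G that by (simp add: s_def)
  qed
  moreover have "continuous_on {0..1} t"
    unfolding t_def by (intro continuous_intros continuous_on_compose2[OF continuous_on_prob_sum_gen continuous]) auto
  moreover have "strict_mono_on {0..1} t"
    unfolding t_def using prob_sum_gen_strict_mono strict_mono in_unit
    by (intro strict_mono_onI) (simp add: ennreal_add_left_cancel_less strict_mono_onD)
  moreover have "continuous_on UNIV s"
    unfolding s_def r_def using r_in_unit
    by (intro continuous_on_compose2[OF H_facts(2)] continuous_intros
        continuous_on_compose2[OF continuous_on_prob_sum_gen_inv]) (auto simp: r_def)
  moreover have "mono s"
  proof (rule monoI)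
    fix u w :: ennreal assume "u \<le> w"
    then have "prob_sum_gen_inv u \<le> prob_sum_gen_inv w"
      by (rule monoD[OF strict_mono_mono[OF prob_sum_gen_inv_strict_mono]])
    then have "r u \<le> r w" unfolding r_def by (intro max.mono) (simp_all add: mult_left_mono)
    then show "s u \<le> s w" unfolding s_def by (intro mono_onD[OF H_facts(3)] r_in_unit)
  qed
  moreover have "\<forall>u. s u \<in> {0..1}" unfolding s_def using H_facts(1)[OF r_in_unit] by blast
  moreover have "grouping_function G" by (rule grouping_function_prob_sum[OF H G])
  moreover have "\<forall>x\<in>{0..1}. t x = ennreal (a / 2) \<longleftrightarrow> x = 0"
  proof
    fix x :: real assume x: "x \<in> {0..1}"
    have "t x = ennreal (a / 2) \<longleftrightarrow> prob_sum_gen (\<phi> x) = prob_sum_gen 0"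
      using ennreal_add_left_cancel[of "ennreal (a / 2)" "prob_sum_gen (\<phi> x)" 0] by (simp add: t_def)
    also have "\<dots> \<longleftrightarrow> \<phi> x = 0" using strict_mono_on_eq[OF prob_sum_gen_strict_mono in_unit[OF x], of 0] by simp
    finally show "t x = ennreal (a / 2) \<longleftrightarrow> x = 0" using eq_0_iff[OF x] by simp
  qed
  ultimately show ?thesis unfolding additively_generated_def by blast
qed

lemma prob_sum_generated_imp_conorm_generated:
  assumes "prob_sum_generated G"
  shows "conorm_generated G"
proof -
  obtain \<phi> H where \<phi>: "unit_automorphism \<phi>" and H: "pseudo_automorphism H"
    and G: "\<forall>x\<in>{0..1}. \<forall>y\<in>{0..1}. G x y = H (prob_sum (\<phi> x) (\<phi> y))"
    using assms unfolding prob_sum_generated_def by blast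
  interpret unit_automorphism \<phi> by (rule \<phi>)
  show ?thesis
    unfolding conorm_generated_def
  proof (intro conjI exI ballI)
    show "grouping_function G" by (rule grouping_function_prob_sum[OF H G])
    show "pseudo_automorphism (\<lambda>x. H (\<phi> x))" by (rule pseudo_automorphism_comp[OF H])
    show "strict_t_conorm (\<lambda>x y. inv_into {0..1} \<phi> (prob_sum (\<phi> x) (\<phi> y)))"
      by (rule strict_t_conorm_conjugate)
    fix x y :: real assume "x \<in> {0..1}" "y \<in> {0..1}"
    then show "G x y = H (\<phi> (inv_into {0..1} \<phi> (prob_sum (\<phi> x) (\<phi> y))))"
      using G inverse_inv_into[OF prob_sum_map_in_unit] by simp
  qed
qed

lemma conorm_generated_imp_prob_sum_generated:
  assumes "conorm_generated G"
  shows "prob_sum_generated G"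
proof -
  obtain F S where F: "pseudo_automorphism F" and S: "strict_t_conorm S"
    and G: "\<forall>x\<in>{0..1}. \<forall>y\<in>{0..1}. G x y = F (S x y)"
    using assms unfolding conorm_generated_def by blast
  obtain \<psi> where \<psi>: "unit_automorphism \<psi>"
    and hom: "\<And>v w. v \<in> {0..1} \<Longrightarrow> w \<in> {0..1} \<Longrightarrow> \<psi> (prob_sum v w) = S (\<psi> v) (\<psi> w)"
    using strict_t_conorm_prob_sum_iso[OF S] by blast
  interpret unit_automorphism \<psi> by (rule \<psi>)
  show ?thesis
    unfolding prob_sum_generated_def
  proof (intro conjI exI ballI)
    show "unit_automorphism (inv_into {0..1} \<psi>)" by (rule inv_into_automorphism)
    show "pseudo_automorphism (\<lambda>x. F (\<psi> x))" by (rule pseudo_automorphism_comp[OF F])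
    fix x y :: real assume x: "x \<in> {0..1}" and y: "y \<in> {0..1}"
    then show "G x y = F (\<psi> (prob_sum (inv_into {0..1} \<psi> x) (inv_into {0..1} \<psi> y)))"
      using G hom[OF inv_into_in_unit[OF x] inv_into_in_unit[OF y]] by (simp add: inverse_inv_into)
  qed
qed

theorem theorem6p4:
  fixes a :: real and G :: "real \<Rightarrow> real \<Rightarrow> real"
  assumes "a \<ge> 0"
    and "\<forall>x\<in>{0..1}. \<forall>y\<in>{0..1}. G x y \<in> {0..1}"
  shows "((\<exists>(t :: real \<Rightarrow> ennreal) (s :: ennreal \<Rightarrow> real).
             continuous_on {0..1} t \<and> strict_mono_on {0..1} t \<and>
             continuous_on UNIV s \<and> mono s \<and> (\<forall>u. s u \<in> {0..1}) \<and>
             (\<forall>x\<in>{0..1}. \<forall>y\<in>{0..1}. G x y = s (t x + t y)) \<and>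
             grouping_function G \<and>
             ((\<forall>x\<in>{0..1}. t x = ennreal (a / 2) \<longleftrightarrow> x = 0) \<or>
              (\<forall>u. s u = 0 \<longleftrightarrow> u \<le> ennreal a)))
         \<longleftrightarrow>
         (grouping_function G \<and>
          (\<exists>F S. pseudo_automorphism F \<and> strict_t_conorm S \<and>
             (\<forall>x\<in>{0..1}. \<forall>y\<in>{0..1}. G x y = F (S x y)))))
       \<and>
       ((grouping_function G \<and>
          (\<exists>F S. pseudo_automorphism F \<and> strict_t_conorm S \<and>
             (\<forall>x\<in>{0..1}. \<forall>y\<in>{0..1}. G x y = F (S x y))))
         \<longleftrightarrow>
         (\<exists>\<phi> H. strict_mono_on {0..1} \<phi> \<and> bij_betw \<phi> {0..1} {0..1} \<and>
             pseudo_automorphism H \<and>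
             (\<forall>x\<in>{0..1}. \<forall>y\<in>{0..1}.
                G x y = H (\<phi> x + \<phi> y - \<phi> x * \<phi> y))))"
proof -
  have "additively_generated a G \<longleftrightarrow> conorm_generated G"
    using assms(1) additively_generated_imp_prob_sum_generated prob_sum_generated_imp_additively_generated
      prob_sum_generated_imp_conorm_generated conorm_generated_imp_prob_sum_generated by blast
  moreover have "conorm_generated G \<longleftrightarrow> prob_sum_generated G"
    using prob_sum_generated_imp_conorm_generated conorm_generated_imp_prob_sum_generated by blast
  ultimately show ?thesis
    by (simp only: additively_generated_def conorm_generated_def prob_sum_generated_def
        unit_automorphism_def prob_sum_def conj_assoc)
qed

end
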